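(* Let $n,p\ge 1$, let $\boldsymbol{\beta}^{0}\in\mathbb{R}^{p}$, and let $\mathbf{x}_1,\dots,\mathbf{x}_n\in\mathbb{R}^p$ (true covariates), $\mathbf{u}_1,\dots,\mathbf{u}_n\in\mathbb{R}^p$ (measurement errors), $\mathbf{w}_i=\mathbf{x}_i+\mathbf{u}_i$ (measured covariates), and $y_1,\dots,y_n\in\mathbb{R}$ (responses). Let $\mathbf{W}=(\mathbf{w}_1,\dots,\mathbf{w}_n)^T$ and $\mathbf{U}=(\mathbf{u}_1,\dots,\mathbf{u}_n)^T$, with entries $w_{ij}$, $u_{ij}$, and assume the measurements are standardized: $\frac1n\sum_{i=1}^n w_{ij}=0$ and $\frac1n\sum_{i=1}^n w_{ij}^2=1$ for $j=1,\dots,p$. Let $\mu:\mathbb{R}\to\mathbb{R}$ be the GLM mean function, assumed infinitely differentiable with $r$th derivative $\mu^{(r)}$, and assume that for each $i$ its Taylor series around $\mathbf{w}_i^T\boldsymbol{\beta}^0$ converges to $\mu(\mathbf{x}_i^T\boldsymbol{\beta}^0)$, i.e. $$\mu(\mathbf{x}_i^T\boldsymbol{\beta}^0)=\sum_{r=0}^\infty \frac{\mu^{(r)}(\mathbf{w}_i^T\boldsymbol{\beta}^0)}{r!}\left(-\mathbf{u}_i^T\boldsymbol{\beta}^0\right)^r,\quad i=1,\dots,n.$$ Let $\epsilon_i=y_i-\mu(\mathbf{x}_i^T\boldsymbol{\beta}^0)$ and $\boldsymbol{\epsilon}=(\epsilon_1,\dots,\epsilon_n)^T$. Suppose $\lambda\ge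 0$ and $\delta\ge 0$ satisfy $$\frac1n\left\|\mathbf{W}^T\boldsymbol{\epsilon}\right\|_\infty\le\lambda\quad\text{and}\quad \|\mathbf{U}\|_\infty=\max_{i,j}|u_{ij}|\le\delta.$$ Then $\boldsymbol{\beta}^0\in\Theta$, where $$\Theta=\left\{\boldsymbol{\beta}\in\mathbb{R}^p:\ \frac1n\max_{1\le j\le p}\left|\sum_{i=1}^n w_{ij}\left\{y_i-\mu(\mathbf{w}_i^T\boldsymbol{\beta})\right\}\right|\le \lambda+\sum_{r=1}^\infty\frac{\delta^r}{r!\sqrt n}\|\boldsymbol{\beta}\|_1^r\left\|\boldsymbol{\mu}^{(r)}(\mathbf{W}\boldsymbol{\beta})\right\|_2\right\},$$ with $\boldsymbol{\mu}^{(r)}(\mathbf{W}\boldsymbol{\beta})=\left(\mu^{(r)}(\mathbf{w}_1^T\boldsymbol{\beta}),\dots,\mu^{(r)}(\mathbf{w}_n^T\boldsymbol{\beta})\right)^T$.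
   Context: This is the setting of a generalized linear model with canonical link: the response has density $\exp\{y\theta-b(\theta)+c(y,\phi)\}$ with linear predictor $\theta=\mathbf{x}^T\boldsymbol{\beta}^0$, and the mean function is $\mu(\theta)=b'(\theta)$ (e.g. $\mu(\theta)=(1+e^{-\theta})^{-1}$ for logistic regression, $\mu(\theta)=e^\theta$ for Poisson regression). The covariates are observed only through the additive measurement error model $\mathbf{w}_i=\mathbf{x}_i+\mathbf{u}_i$. Here $\|\cdot\|_\infty$ denotes the maximum absolute component (entry) norm of a vector or matrix, $\|\cdot\|_1$ and $\|\cdot\|_2$ the usual $\ell_1$ and $\ell_2$ vector norms. *)

theory Defs
  imports "HOL-Analysis.Analysis"
begin

definition mu_deriv :: "(real \<Rightarrow> real) \<Rightarrow> nat \<Rightarrow> real \<Rightarrow> real" where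
  "mu_deriv \<mu> r = (deriv ^^ r) \<mu>"

text \<open>Observations are indexed by a finite type 'n (n = CARD('n)),
  covariates live in real^'p (p = CARD('p)). The series on the right-hand side has
  nonnegative terms and is summed in ennreal (value infinity if it diverges).\<close>
definition Theta ::
  "(real \<Rightarrow> real) \<Rightarrow> ('n::finite \<Rightarrow> real^'p::finite) \<Rightarrow> ('n \<Rightarrow> real) \<Rightarrow> real \<Rightarrow> real \<Rightarrow> (real^'p) set" where
  "Theta \<mu> w y lam \<delta> =
    {\<beta>. ennreal ((1 / real CARD('n)) *
            Max (range (\<lambda>j. \<bar>\<Sum>i\<in>UNIV. w i $ j * (y i - \<mu> (w i \<bullet> \<beta>))\<bar>)))
        \<le> ennreal lam +
          (\<Sum>r. ennreal (\<delta> ^ Suc r / (fact (Suc r) * sqrt (real CARD('n)))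
                 * (\<Sum>j\<in>UNIV. \<bar>\<beta> $ j\<bar>) ^ Suc r
                 * sqrt (\<Sum>i\<in>UNIV. (mu_deriv \<mu> (Suc r) (w i \<bullet> \<beta>))\<^sup>2)))}"

end

theory Submission
  imports Defs
begin

text \<open>Write \<open>\<mu>(x\<^sub>i\<^sup>T\<beta>\<^sup>0) - \<mu>(w\<^sub>i\<^sup>T\<beta>\<^sup>0)\<close> as the tail \<open>r \<ge> 1\<close> of the Taylor series
  around \<open>w\<^sub>i\<^sup>T\<beta>\<^sup>0\<close>. Then for every coordinate \<open>j\<close> the score splits into the noise term
  \<open>\<Sum>\<^sub>i w\<^sub>i\<^sub>j \<epsilon>\<^sub>i\<close>, bounded by \<open>n\<lambda>\<close>, plus a series whose \<open>r\<close>-th term is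
  \<open>\<Sum>\<^sub>i w\<^sub>i\<^sub>j \<mu>\<^sup>(\<^sup>r\<^sup>)(w\<^sub>i\<^sup>T\<beta>\<^sup>0)(-u\<^sub>i\<^sup>T\<beta>\<^sup>0)\<^sup>r/r!\<close>. Since \<open>|u\<^sub>i\<^sup>T\<beta>\<^sup>0| \<le> \<delta>\<parallel>\<beta>\<^sup>0\<parallel>\<^sub>1\<close> and the
  standardized column \<open>w\<^sub>\<cdot>\<^sub>j\<close> has Euclidean norm \<open>\<surd>n\<close>, Cauchy-Schwarz bounds that term by
  \<open>\<surd>n \<delta>\<^sup>r \<parallel>\<beta>\<^sup>0\<parallel>\<^sub>1\<^sup>r \<parallel>\<mu>\<^sup>(\<^sup>r\<^sup>)(W\<beta>\<^sup>0)\<parallel>\<^sub>2 / r!\<close>, and summing absolute values bounds the series.\<close>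

lemma abs_sum_mult_le_sqrt_sum_squares:
  fixes v d :: "'a \<Rightarrow> real"
  shows "\<bar>\<Sum>i\<in>A. v i * d i\<bar> \<le> sqrt (\<Sum>i\<in>A. (v i)\<^sup>2) * sqrt (\<Sum>i\<in>A. (d i)\<^sup>2)"
proof -
  have "sqrt ((\<Sum>i\<in>A. v i * d i)\<^sup>2) \<le> sqrt ((\<Sum>i\<in>A. (v i)\<^sup>2) * (\<Sum>i\<in>A. (d i)\<^sup>2))"
    by (rule real_sqrt_le_mono) (rule Cauchy_Schwarz_ineq_sum)
  then show ?thesis by (simp add: real_sqrt_mult)
qed

lemma abs_sum_mult_div_le_scaled_sqrt_sum_squares:
  fixes v d m :: "'a \<Rightarrow> real"
  assumes v_sq: "(\<Sum>i\<in>A. (v i)\<^sup>2) = n" and n_pos: "n > 0"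
    and d_le: "\<And>i. i \<in> A \<Longrightarrow> \<bar>d i\<bar> \<le> C * \<bar>m i\<bar>" and C_nonneg: "C \<ge> 0"
  shows "\<bar>\<Sum>i\<in>A. v i * d i\<bar> / n \<le> C / sqrt n * sqrt (\<Sum>i\<in>A. (m i)\<^sup>2)"
proof -
  have "sqrt (\<Sum>i\<in>A. (d i)\<^sup>2) \<le> sqrt (\<Sum>i\<in>A. (C * m i)\<^sup>2)"
  proof (intro real_sqrt_le_mono sum_mono)
    fix i assume "i \<in> A"
    then have "\<bar>d i\<bar>\<^sup>2 \<le> (C * \<bar>m i\<bar>)\<^sup>2" by (intro power_mono d_le) auto
    then show "(d i)\<^sup>2 \<le> (C * m i)\<^sup>2" by (simp add: power_mult_distrib)
  qed
  also have "\<dots> = C * sqrt (\<Sum>i\<in>A. (m i)\<^sup>2)"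
    using C_nonneg by (simp add: power_mult_distrib real_sqrt_mult flip: sum_distrib_left)
  finally have "sqrt n * sqrt (\<Sum>i\<in>A. (d i)\<^sup>2) \<le> sqrt n * (C * sqrt (\<Sum>i\<in>A. (m i)\<^sup>2))"
    by (rule mult_left_mono) (use n_pos in simp)
  with abs_sum_mult_le_sqrt_sum_squares[of v d A]
  have "\<bar>\<Sum>i\<in>A. v i * d i\<bar> \<le> sqrt n * (C * sqrt (\<Sum>i\<in>A. (m i)\<^sup>2))"
    unfolding v_sq by linarith
  then have "\<bar>\<Sum>i\<in>A. v i * d i\<bar> / n \<le> sqrt n * (C * sqrt (\<Sum>i\<in>A. (m i)\<^sup>2)) / n"
    using n_pos by (simp add: divide_right_mono)
  also have "\<dots> = sqrt n / n * (C * sqrt (\<Sum>i\<in>A. (m i)\<^sup>2))"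
    by simp
  also have "\<dots> = C / sqrt n * sqrt (\<Sum>i\<in>A. (m i)\<^sup>2)"
    using sqrt_divide_self_eq[of n] n_pos by (simp add: divide_inverse)
  finally show ?thesis .
qed

lemma ennreal_abs_suminf_le:
  fixes c :: "nat \<Rightarrow> real"
  shows "ennreal \<bar>suminf c\<bar> \<le> (\<Sum>r. ennreal \<bar>c r\<bar>)"
proof (cases "summable (\<lambda>r. \<bar>c r\<bar>)")
  case True
  then have "(\<Sum>r. ennreal \<bar>c r\<bar>) = ennreal (\<Sum>r. \<bar>c r\<bar>)"
    by (intro suminf_ennreal2) auto
  then show ?thesis
    using summable_rabs[OF True] by (simp only: ennreal_leI)
next
  case False
  have "(\<Sum>r. ennreal \<bar>c r\<bar>) = top"
  proof (rule ccontr)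
    assume "(\<Sum>r. ennreal \<bar>c r\<bar>) \<noteq> top"
    then have "summable (\<lambda>r. \<bar>c r\<bar>)" by (rule summable_suminf_not_top[rotated]) simp
    with False show False by contradiction
  qed
  then show ?thesis by simp
qed

lemma ennreal_abs_add_sums_le:
  fixes c B :: "nat \<Rightarrow> real"
  assumes "c sums t" and "\<And>r. \<bar>c r\<bar> \<le> B r"
  shows "ennreal \<bar>a + t\<bar> \<le> ennreal \<bar>a\<bar> + (\<Sum>r. ennreal (B r))"
proof -
  have "ennreal \<bar>t\<bar> \<le> (\<Sum>r. ennreal \<bar>c r\<bar>)"
    using ennreal_abs_suminf_le[of c] by (simp only: sums_unique[OF assms(1)])
  also have "\<dots> \<le> (\<Sum>r. ennreal (B r))"
    using assms(2) by (intro suminf_le summableI ennreal_leI)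
  finally have t_le: "ennreal \<bar>t\<bar> \<le> (\<Sum>r. ennreal (B r))" .
  have "ennreal \<bar>a + t\<bar> \<le> ennreal (\<bar>a\<bar> + \<bar>t\<bar>)"
    by (rule ennreal_leI) (rule abs_triangle_ineq)
  also have "\<dots> = ennreal \<bar>a\<bar> + ennreal \<bar>t\<bar>"
    by (rule ennreal_plus) simp_all
  also have "\<dots> \<le> ennreal \<bar>a\<bar> + (\<Sum>r. ennreal (B r))"
    using t_le by (rule add_left_mono)
  finally show ?thesis .
qed

lemma Max_range_ge:
  fixes f :: "'a::finite \<Rightarrow> 'b::linorder"
  shows "f x \<le> Max (range f)"
  by (rule Max_ge) auto

lemma abs_inner_le_sum_abs:
  fixes u \<beta> :: "real^'p::finite"
  assumes "\<And>j. \<bar>u $ j\<bar> \<le> \<delta>"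
  shows "\<bar>u \<bullet> \<beta>\<bar> \<le> \<delta> * (\<Sum>j\<in>UNIV. \<bar>\<beta> $ j\<bar>)"
proof -
  have "\<bar>u \<bullet> \<beta>\<bar> \<le> (\<Sum>j\<in>UNIV. \<bar>u $ j * \<beta> $ j\<bar>)"
    unfolding inner_vec_def by (simp add: sum_abs)
  also have "\<dots> \<le> (\<Sum>j\<in>UNIV. \<delta> * \<bar>\<beta> $ j\<bar>)"
    by (intro sum_mono) (simp add: abs_mult mult_right_mono assms)
  finally show ?thesis by (simp add: sum_distrib_left)
qed

lemma score_coordinate_le_noise_plus_taylor_tail:
  fixes v y t s z :: "'n::finite \<Rightarrow> real" and D :: "nat \<Rightarrow> real \<Rightarrow> real"
  assumes taylor: "\<And>i. (\<lambda>r. D r (t i) / fact r * s i ^ r) sums z i"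
    and v_sq: "(\<Sum>i\<in>UNIV. (v i)\<^sup>2) = real CARD('n)"
    and s_le: "\<And>i. \<bar>s i\<bar> \<le> \<rho>"
  shows "ennreal (1 / real CARD('n) * \<bar>\<Sum>i\<in>UNIV. v i * (y i - D 0 (t i))\<bar>)
    \<le> ennreal (1 / real CARD('n) * \<bar>\<Sum>i\<in>UNIV. v i * (y i - z i)\<bar>)
      + (\<Sum>r. ennreal (\<rho> ^ Suc r / (fact (Suc r) * sqrt (real CARD('n)))
                     * sqrt (\<Sum>i\<in>UNIV. (D (Suc r) (t i))\<^sup>2)))"
proof -
  define n where "n = real CARD('n)"
  have n_pos: "n > 0" unfolding n_def by simp
  have \<rho>_nonneg: "\<rho> \<ge> 0" using s_le[of undefined] by linarith
  define d where "d r i = D (Suc r) (t i) / fact (Suc r) * s i ^ Suc r" for r i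
  define c where "c r = (\<Sum>i\<in>UNIV. v i * d r i) / n" for r
  have tail: "(\<lambda>r. d r i) sums (z i - D 0 (t i))" for i
  proof -
    have "(\<lambda>r. D r (t i) / fact r * s i ^ r) sums (z i - D 0 (t i) + D 0 (t i) / fact 0 * s i ^ 0)"
      using taylor[of i] by simp
    then show ?thesis unfolding d_def by (rule sums_Suc_iff[THEN iffD2])
  qed
  have c_sums: "c sums ((\<Sum>i\<in>UNIV. v i * (z i - D 0 (t i))) / n)"
    unfolding c_def by (intro sums_divide sums_sum sums_mult tail)
  have c_le: "\<bar>c r\<bar> \<le> \<rho> ^ Suc r / (fact (Suc r) * sqrt n) * sqrt (\<Sum>i\<in>UNIV. (D (Suc r) (t i))\<^sup>2)"
    for r
  proof -
    have "\<bar>d r i\<bar> \<le> \<rho> ^ Suc r / fact (Suc r) * \<bar>D (Suc r) (t i)\<bar>" for i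
    proof -
      have "\<bar>d r i\<bar> = \<bar>D (Suc r) (t i)\<bar> / fact (Suc r) * \<bar>s i\<bar> ^ Suc r"
        by (simp add: d_def abs_mult power_abs)
      also have "\<dots> \<le> \<bar>D (Suc r) (t i)\<bar> / fact (Suc r) * \<rho> ^ Suc r"
        by (intro mult_left_mono power_mono s_le) auto
      also have "\<dots> = \<rho> ^ Suc r / fact (Suc r) * \<bar>D (Suc r) (t i)\<bar>"
        by simp
      finally show ?thesis .
    qed
    then have "\<bar>\<Sum>i\<in>UNIV. v i * d r i\<bar> / n
        \<le> \<rho> ^ Suc r / fact (Suc r) / sqrt n * sqrt (\<Sum>i\<in>UNIV. (D (Suc r) (t i))\<^sup>2)"
      using n_pos \<rho>_nonneg v_sq[folded n_def]
      by (intro abs_sum_mult_div_le_scaled_sqrt_sum_squares) auto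
    then show ?thesis
      using n_pos by (simp add: c_def abs_divide)
  qed
  have split: "(\<Sum>i\<in>UNIV. v i * (y i - D 0 (t i))) / n
      = (\<Sum>i\<in>UNIV. v i * (y i - z i)) / n + (\<Sum>i\<in>UNIV. v i * (z i - D 0 (t i))) / n"
    unfolding add_divide_distrib[symmetric] by (subst sum.distrib[symmetric]) (simp add: algebra_simps)
  have "ennreal \<bar>(\<Sum>i\<in>UNIV. v i * (y i - D 0 (t i))) / n\<bar>
      \<le> ennreal \<bar>(\<Sum>i\<in>UNIV. v i * (y i - z i)) / n\<bar>
        + (\<Sum>r. ennreal (\<rho> ^ Suc r / (fact (Suc r) * sqrt n) * sqrt (\<Sum>i\<in>UNIV. (D (Suc r) (t i))\<^sup>2)))"
    unfolding split using c_sums c_le by (rule ennreal_abs_add_sums_le)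
  then show ?thesis
    using n_pos by (simp add: n_def abs_divide)
qed

theorem proposition1:
  fixes \<beta>0 :: "real^'p::finite"
    and x u w :: "'n::finite \<Rightarrow> real^'p"
    and y :: "'n \<Rightarrow> real"
    and \<mu> :: "real \<Rightarrow> real"
    and lam \<delta> :: real
  assumes w_def: "\<And>i. w i = x i + u i"
    and std_mean: "\<And>j. (1 / real CARD('n)) * (\<Sum>i\<in>UNIV. w i $ j) = 0"
    and std_var: "\<And>j. (1 / real CARD('n)) * (\<Sum>i\<in>UNIV. (w i $ j)\<^sup>2) = 1"
    and smooth: "\<And>r t. mu_deriv \<mu> r differentiable (at t)"
    and taylor: "\<And>i. (\<lambda>r. mu_deriv \<mu> r (w i \<bullet> \<beta>0) / fact r * (- (u i \<bullet> \<beta>0)) ^ r)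
                        sums \<mu> (x i \<bullet> \<beta>0)"
    and lam_nonneg: "lam \<ge> 0" and delta_nonneg: "\<delta> \<ge> 0"
    and lam_bound: "(1 / real CARD('n)) *
          Max (range (\<lambda>j. \<bar>\<Sum>i\<in>UNIV. w i $ j * (y i - \<mu> (x i \<bullet> \<beta>0))\<bar>)) \<le> lam"
    and U_bound: "Max (range (\<lambda>(i, j). \<bar>u i $ j\<bar>)) \<le> \<delta>"
  shows "\<beta>0 \<in> Theta \<mu> w y lam \<delta>"
proof -
  define n where "n = real CARD('n)"
  define L where "L = (\<Sum>j\<in>UNIV. \<bar>\<beta>0 $ j\<bar>)"
  define score where "score = (\<lambda>j. \<bar>\<Sum>i\<in>UNIV. w i $ j * (y i - \<mu> (w i \<bullet> \<beta>0))\<bar>)"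
  define noise where "noise = (\<lambda>j. \<bar>\<Sum>i\<in>UNIV. w i $ j * (y i - \<mu> (x i \<bullet> \<beta>0))\<bar>)"
  have u\<beta>_le: "\<bar>- (u i \<bullet> \<beta>0)\<bar> \<le> \<delta> * L" for i
    using Max_range_ge[of "\<lambda>(i, j). \<bar>u i $ j\<bar>"] U_bound
    unfolding abs_minus_cancel L_def by (intro abs_inner_le_sum_abs) fastforce
  have noise_le: "1 / n * noise j \<le> lam" for j
    using mult_left_mono[OF Max_range_ge[of noise j], of "1 / n"] lam_bound
    unfolding n_def noise_def by simp
  have col_sq: "(\<Sum>i\<in>UNIV. (w i $ j)\<^sup>2) = real CARD('n)" for j
    using std_var[of j] by (simp add: field_simps)
  have score_le: "ennreal (1 / n * score j) \<le> ennreal lam +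
      (\<Sum>r. ennreal (\<delta> ^ Suc r / (fact (Suc r) * sqrt n) * L ^ Suc r
                     * sqrt (\<Sum>i\<in>UNIV. (mu_deriv \<mu> (Suc r) (w i \<bullet> \<beta>0))\<^sup>2)))" for j
  proof -
    have "ennreal (1 / n * score j) \<le> ennreal (1 / n * noise j) +
        (\<Sum>r. ennreal ((\<delta> * L) ^ Suc r / (fact (Suc r) * sqrt n)
                       * sqrt (\<Sum>i\<in>UNIV. (mu_deriv \<mu> (Suc r) (w i \<bullet> \<beta>0))\<^sup>2)))"
      using score_coordinate_le_noise_plus_taylor_tail[of "mu_deriv \<mu>" "\<lambda>i. w i \<bullet> \<beta>0"
          "\<lambda>i. - (u i \<bullet> \<beta>0)" "\<lambda>i. \<mu> (x i \<bullet> \<beta>0)" "\<lambda>i. w i $ j" "\<delta> * L" y,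
          OF taylor col_sq u\<beta>_le]
      unfolding score_def noise_def n_def by (simp add: mu_deriv_def)
    also have "\<dots> \<le> ennreal lam +
        (\<Sum>r. ennreal (\<delta> ^ Suc r / (fact (Suc r) * sqrt n) * L ^ Suc r
                       * sqrt (\<Sum>i\<in>UNIV. (mu_deriv \<mu> (Suc r) (w i \<bullet> \<beta>0))\<^sup>2)))"
      using ennreal_leI[OF noise_le[of j]] by (simp add: power_mult_distrib mult_ac add_right_mono)
    finally show ?thesis .
  qed
  have "Max (range score) \<in> range score" by (rule Max_in) auto
  then obtain j where "Max (range score) = score j" by blast
  with score_le[of j] show ?thesis
    unfolding Theta_def mem_Collect_eq score_def[symmetric] n_def[symmetric] L_def[symmetric]
    by simp
qed

end
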